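(* Let $X$ be a finite set of cardinality $|X|$, let $x_1,\dots,x_K\in X$, and let $a_1,\dots,a_K:X\to[0,\infty)$ be functions such that $a_i(x_i)\ge a_{\min}>0$ for every $i$. Then $$\sum_{k=1}^K\frac{1}{\sum_{i\le k}a_i(x_k)}=\tilde O\!\left(\frac{|X|}{a_{\min}}\right),$$ where $\tilde O$ hides factors polylogarithmic in $K$. *)

theory Defs
  imports Complex_Main
begin

end

theory Submission
  imports Defs "HOL-Analysis.Analysis"
begin

text \<open>
  Let \<open>r k = visit_count x k\<close> be the number of indices \<open>j \<le> k\<close> with \<open>x j = x k\<close>. Each of these contributes
  at least \<open>amin\<close> to the \<open>k\<close>-th denominator, so the \<open>k\<close>-th term is at most \<open>1 / (amin * r k)\<close>.
  Along the visits to a fixed point \<open>y \<in> X\<close> the counts \<open>r k\<close> run through \<open>1, 2, 3, \<dots>\<close>,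
  so the terms belonging to \<open>y\<close> sum to at most the harmonic number \<open>H\<^sub>K \<le> 1 + ln K\<close>.
  Summing over \<open>y \<in> X\<close> gives the bound \<open>|X| (1 + ln K) / amin\<close>.
\<close>

lemma harm_le_1_plus_ln: "harm n \<le> 1 + ln (real n)"
proof (cases "n = 0")
  case False
  then have "harm n - ln (real n) \<le> harm 1 - ln (real (1::nat))"
    by (intro euler_mascheroni_sequence_decreasing) auto
  then show ?thesis by (simp add: harm_def)
qed (simp add: harm_def)

definition visit_count :: "(nat \<Rightarrow> 'a) \<Rightarrow> nat \<Rightarrow> nat" where
  "visit_count x k = card {j \<in> {1..k}. x j = x k}"

lemma visit_count_ge_1:
  assumes "1 \<le> k"
  shows "1 \<le> visit_count x k"
proof -
  let ?S = "{j \<in> {1..k}. x j = x k}"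
  have "finite ?S" and "k \<in> ?S"
    using assms by auto
  then have "0 < card ?S"
    using card_gt_0_iff by blast
  then show ?thesis
    unfolding visit_count_def by simp
qed

lemma visit_count_le: "visit_count x k \<le> k"
proof -
  have "visit_count x k \<le> card {1..k}"
    unfolding visit_count_def by (intro card_mono) auto
  then show ?thesis by simp
qed

lemma visit_count_strict_mono:
  assumes "j < k" and "x j = x k"
  shows "visit_count x j < visit_count x k"
proof -
  have "{i \<in> {1..j}. x i = x j} \<subseteq> {i \<in> {1..k}. x i = x k}"
    and "k \<in> {i \<in> {1..k}. x i = x k} - {i \<in> {1..j}. x i = x j}"
    using assms by auto
  then have "{i \<in> {1..j}. x i = x j} \<subset> {i \<in> {1..k}. x i = x k}"
    by blast
  then show ?thesis
    unfolding visit_count_def by (intro psubset_card_mono) auto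
qed

lemma inj_on_visit_count: "inj_on (visit_count x) {k. x k = y}"
proof (rule inj_onI)
  fix j k assume "j \<in> {k. x k = y}" "k \<in> {k. x k = y}" "visit_count x j = visit_count x k"
  then show "j = k"
    using visit_count_strict_mono[of j k x] visit_count_strict_mono[of k j x]
    by (cases j k rule: linorder_cases) auto
qed

lemma sum_inverse_visit_count_level_set:
  "(\<Sum>k\<in>{k\<in>{1..K}. x k = y}. 1 / real (visit_count x k)) \<le> harm K"
proof -
  let ?T = "{k\<in>{1..K}. x k = y}"
  have "inj_on (visit_count x) ?T"
    by (rule inj_on_subset[OF inj_on_visit_count[of x y]]) auto
  then have "(\<Sum>k\<in>?T. 1 / real (visit_count x k)) = (\<Sum>n\<in>visit_count x ` ?T. 1 / real n)"
    by (simp add: sum.reindex)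
  also have "\<dots> \<le> (\<Sum>n=1..K. 1 / real n)"
  proof (intro sum_mono2)
    show "visit_count x ` ?T \<subseteq> {1..K}"
    proof
      fix n assume "n \<in> visit_count x ` ?T"
      then obtain k where "k \<in> ?T" and "n = visit_count x k" by blast
      then show "n \<in> {1..K}"
        using visit_count_ge_1[of k x] visit_count_le[of x k] by auto
    qed
  qed auto
  also have "\<dots> = harm K"
    by (simp add: harm_def divide_inverse)
  finally show ?thesis .
qed

lemma sum_inverse_visit_count_le:
  assumes "finite X" and "x ` {1..K} \<subseteq> X"
  shows "(\<Sum>k=1..K. 1 / real (visit_count x k)) \<le> real (card X) * harm K"
proof -
  have "(\<Sum>k=1..K. 1 / real (visit_count x k))
      = (\<Sum>y\<in>X. \<Sum>k\<in>{k\<in>{1..K}. x k = y}. 1 / real (visit_count x k))"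
    using assms by (intro sum.group[symmetric]) auto
  also have "\<dots> \<le> (\<Sum>y\<in>X. harm K)"
    by (intro sum_mono sum_inverse_visit_count_level_set)
  finally show ?thesis by simp
qed

lemma visit_count_mult_le_sum:
  fixes a :: "nat \<Rightarrow> 'a \<Rightarrow> real"
  assumes nonneg: "\<forall>i\<in>{1..k}. 0 \<le> a i (x k)"
    and lower: "\<forall>i\<in>{1..k}. amin \<le> a i (x i)"
  shows "amin * real (visit_count x k) \<le> (\<Sum>i=1..k. a i (x k))"
proof -
  let ?S = "{i \<in> {1..k}. x i = x k}"
  have "amin * real (visit_count x k) = (\<Sum>i\<in>?S. amin)"
    by (simp add: visit_count_def)
  also have "\<dots> \<le> (\<Sum>i\<in>?S. a i (x k))"
    using lower by (intro sum_mono) (metis (mono_tags, lifting) mem_Collect_eq)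
  also have "\<dots> \<le> (\<Sum>i=1..k. a i (x k))"
    using nonneg by (intro sum_mono2) auto
  finally show ?thesis .
qed

lemma inverse_sum_le_inverse_visit_count:
  fixes a :: "nat \<Rightarrow> 'a \<Rightarrow> real"
  assumes "1 \<le> k" and "amin > 0"
    and "\<forall>i\<in>{1..k}. 0 \<le> a i (x k)"
    and "\<forall>i\<in>{1..k}. amin \<le> a i (x i)"
  shows "1 / (\<Sum>i=1..k. a i (x k)) \<le> 1 / amin * (1 / real (visit_count x k))"
proof -
  have "amin * real (visit_count x k) \<le> (\<Sum>i=1..k. a i (x k))"
    using assms by (intro visit_count_mult_le_sum)
  moreover have "0 < amin * real (visit_count x k)"
    using assms visit_count_ge_1[of k x] by simp
  ultimately show ?thesis
    by (simp add: divide_left_mono)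
qed

theorem lemma18:
  "\<exists>(C::real) (d::nat). \<forall>(X::'a set) (K::nat) (x::nat \<Rightarrow> 'a) (a::nat \<Rightarrow> 'a \<Rightarrow> real) (amin::real).
     finite X \<longrightarrow>
     (\<forall>i\<in>{1..K}. x i \<in> X) \<longrightarrow>
     (\<forall>i\<in>{1..K}. \<forall>y\<in>X. a i y \<ge> 0) \<longrightarrow>
     amin > 0 \<longrightarrow>
     (\<forall>i\<in>{1..K}. a i (x i) \<ge> amin) \<longrightarrow>
     (\<Sum>k=1..K. 1 / (\<Sum>i=1..k. a i (x k)))
        \<le> C * (real (card X) / amin) * (1 + ln (real K)) ^ d"
proof (intro exI allI impI)
  fix X :: "'a set" and K :: nat and x :: "nat \<Rightarrow> 'a" and a :: "nat \<Rightarrow> 'a \<Rightarrow> real" and amin :: real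
  assume "finite X" and xX: "\<forall>i\<in>{1..K}. x i \<in> X"
    and nonneg: "\<forall>i\<in>{1..K}. \<forall>y\<in>X. a i y \<ge> 0" and "amin > 0"
    and lower: "\<forall>i\<in>{1..K}. a i (x i) \<ge> amin"
  have "1 / (\<Sum>i=1..k. a i (x k)) \<le> 1 / amin * (1 / real (visit_count x k))"
    if "k \<in> {1..K}" for k
    using that \<open>amin > 0\<close> nonneg lower xX
    by (intro inverse_sum_le_inverse_visit_count) auto
  then have "(\<Sum>k=1..K. 1 / (\<Sum>i=1..k. a i (x k)))
      \<le> (\<Sum>k=1..K. 1 / amin * (1 / real (visit_count x k)))"
    by (intro sum_mono) auto
  also have "\<dots> = 1 / amin * (\<Sum>k=1..K. 1 / real (visit_count x k))"
    by (rule sum_distrib_left[symmetric])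
  also have "\<dots> \<le> 1 / amin * (real (card X) * harm K)"
    using sum_inverse_visit_count_le[of X x K] \<open>finite X\<close> xX \<open>amin > 0\<close>
    by (intro mult_left_mono) auto
  also have "\<dots> \<le> 1 / amin * (real (card X) * (1 + ln (real K)))"
    using harm_le_1_plus_ln[of K] \<open>amin > 0\<close> by (intro mult_left_mono) auto
  finally show "(\<Sum>k=1..K. 1 / (\<Sum>i=1..k. a i (x k)))
      \<le> 1 * (real (card X) / amin) * (1 + ln (real K)) ^ 1"
    by simp
qed

end
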